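(* Let $d, N, M \ge 1$ be integers, $\sigma \ge 0$, and let $\Lambda \in \mathbb{R}^{d\times d}$ be symmetric positive semidefinite with eigendecomposition $\Lambda = QDQ^\top$, $Q$ orthonormal, $D = \mathrm{diag}([\lambda_1,\dots,\lambda_d])$, $\lambda_1\ge\dots\ge\lambda_d\ge 0$. For $k\in\{0,\dots,d\}$ let $V^{(k)} = \mathrm{diag}([v^{(k)}_1,\dots,v^{(k)}_d])$ with $v^{(k)}_i = \frac{N}{(N+1)\lambda_i + \mathrm{tr}(D)}$ for $i\le k$ and $v^{(k)}_i=0$ for $i>k$, and let $f^{(k)}$ be the model $$f^{(k)}(E) = \left[E + W^{PV}_k E\cdot\frac{E^\top W^{KQ}_k E}{M}\right]_{(d+1),(M+1)},\quad W^{PV}_k = \begin{pmatrix}0_{d\times d} & 0_d\\ 0_d^\top & 1/c_k\end{pmatrix},\quad W^{KQ}_k = \begin{pmatrix} c_k QV^{(k)}Q^\top & 0_d\\ 0_d^\top & 0\end{pmatrix}$$ for some nonzero constant $c_k$ (the optimal rank-$k$ solution). Let $0 \le r \le r' \le d$, $f_1 = f^{(r)}$, $f_2 = f^{(r')}$, and let $w = Qs$ where $s \in \mathbb{R}^d$ satisfies $s_i = 0$ for all $r < i \le d$. Let $x_1,\dots,x_M,x_q \overset{\text{i.i.d.}}{\sim}\mathcal{N}(0,\Lambda)$, independently $\epsilon_1,\dots,\epsilon_M\overset{\text{i.i.d.}}{\sim}\mathcal N(0,\sigma^2)$, and $$\widehat{E} = \begin{pmatrix} x_1 & \cdots & x_M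 & x_q \\ \langle w,x_1\rangle + \epsilon_1 & \cdots & \langle w,x_M\rangle + \epsilon_M & 0\end{pmatrix},$$ and define $\mathcal{L}(f;\widehat E) := \mathbb{E}_{x_1,\epsilon_1,\dots,x_M,\epsilon_M,x_q}\left(f(\widehat E) - \langle w,x_q\rangle\right)^2$. Then $$\mathcal{L}(f_2;\widehat E) - \mathcal{L}(f_1;\widehat E) = \frac1M\left(\|s\|_D^2 + \sigma^2\right)\sum_{i=r+1}^{r'}\left(\frac{N\lambda_i}{(N+1)\lambda_i + \mathrm{tr}(D)}\right)^2.$$
   Context: For a positive semidefinite matrix $A$, $\|x\|_A^2 := x^\top A x$. The model $f^{(k)}$ is the optimal rank-$k$ one-layer linear self-attention solution for in-context linear regression with $N$ pretraining examples per prompt (pretraining tokens from $\mathcal N(0,\Lambda)$, task weights from $\mathcal N(0,I_d)$); at evaluation the normalization factor equals $M$. *)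

theory Defs
  imports "HOL-Probability.Probability"
begin

text \<open>Finite matrices are represented as functions nat => nat => real, with all
  dimensions explicit; indices are 0-based. Vectors are nat => real.\<close>

definition mmul :: "nat \<Rightarrow> (nat \<Rightarrow> nat \<Rightarrow> real) \<Rightarrow> (nat \<Rightarrow> nat \<Rightarrow> real) \<Rightarrow> (nat \<Rightarrow> nat \<Rightarrow> real)" where
  "mmul n A B = (\<lambda>i j. \<Sum>l<n. A i l * B l j)"

definition mtrans :: "(nat \<Rightarrow> nat \<Rightarrow> real) \<Rightarrow> (nat \<Rightarrow> nat \<Rightarrow> real)" where
  "mtrans A = (\<lambda>i j. A j i)"

definition lsa :: "nat \<Rightarrow> nat \<Rightarrow> (nat \<Rightarrow> nat \<Rightarrow> real) \<Rightarrow> (nat \<Rightarrow> nat \<Rightarrow> real)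
    \<Rightarrow> (nat \<Rightarrow> nat \<Rightarrow> real) \<Rightarrow> real" where
  "lsa d M WPV WKQ E =
     E d M + mmul (M+1) (mmul (d+1) WPV E) (mmul (d+1) (mmul (d+1) (mtrans E) WKQ) E) d M / real M"

definition trD :: "nat \<Rightarrow> (nat \<Rightarrow> real) \<Rightarrow> real" where
  "trD d lam = (\<Sum>i<d. lam i)"

text \<open>Diagonal of V^(k) (0-based: entries i < k are nonzero).\<close>
definition Vk :: "nat \<Rightarrow> nat \<Rightarrow> (nat \<Rightarrow> real) \<Rightarrow> nat \<Rightarrow> nat \<Rightarrow> real" where
  "Vk d N lam k i = (if i < k then real N / ((real N + 1) * lam i + trD d lam) else 0)"

definition WPV :: "nat \<Rightarrow> real \<Rightarrow> (nat \<Rightarrow> nat \<Rightarrow> real)" where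
  "WPV d c = (\<lambda>i j. if i = d \<and> j = d then 1 / c else 0)"

definition WKQ :: "nat \<Rightarrow> (nat \<Rightarrow> nat \<Rightarrow> real) \<Rightarrow> (nat \<Rightarrow> real) \<Rightarrow> real \<Rightarrow> (nat \<Rightarrow> nat \<Rightarrow> real)" where
  "WKQ d Q v c = (\<lambda>i j. if i < d \<and> j < d then c * (\<Sum>l<d. Q i l * v l * Q j l) else 0)"

definition fk :: "nat \<Rightarrow> nat \<Rightarrow> nat \<Rightarrow> (nat \<Rightarrow> nat \<Rightarrow> real) \<Rightarrow> (nat \<Rightarrow> real) \<Rightarrow> real \<Rightarrow> nat
    \<Rightarrow> (nat \<Rightarrow> nat \<Rightarrow> real) \<Rightarrow> real" where
  "fk d N M Q lam c k E = lsa d M (WPV d c) (WKQ d Q (Vk d N lam k) c) E"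

definition Ehat :: "nat \<Rightarrow> nat \<Rightarrow> (nat \<Rightarrow> real) \<Rightarrow> (nat \<Rightarrow> nat \<Rightarrow> real) \<Rightarrow> (nat \<Rightarrow> real)
    \<Rightarrow> (nat \<Rightarrow> real) \<Rightarrow> (nat \<Rightarrow> nat \<Rightarrow> real)" where
  "Ehat d M w xs eps xq = (\<lambda>i j.
     if i < d \<and> j < M then xs j i
     else if i = d \<and> j < M then (\<Sum>l<d. w l * xs j l) + eps j
     else if i < d \<and> j = M then xq i
     else 0)"

text \<open>Standard normal on the reals, scaled normal N(0, sigma^2) (sigma >= 0),
  and the (possibly degenerate) Gaussian N(0, Lambda) on R^d, defined as the law of
  A z with z standard normal in R^d and A A^T = Lambda.\<close>
definition std_normal :: "real measure" where
  "std_normal = density lborel std_normal_density"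

definition normal_sigma :: "real \<Rightarrow> real measure" where
  "normal_sigma \<sigma> = distr std_normal borel (\<lambda>z. \<sigma> * z)"

definition gauss_vec :: "nat \<Rightarrow> (nat \<Rightarrow> nat \<Rightarrow> real) \<Rightarrow> (nat \<Rightarrow> real) measure" where
  "gauss_vec d \<Lambda> =
     (let A = (SOME A. \<forall>i<d. \<forall>j<d. (\<Sum>l<d. A i l * A j l) = \<Lambda> i j)
      in distr (PiM {..<d} (\<lambda>_. std_normal)) (PiM {..<d} (\<lambda>_. borel))
           (\<lambda>z. restrict (\<lambda>i. \<Sum>l<d. A i l * z l) {..<d}))"

definition data_measure :: "nat \<Rightarrow> nat \<Rightarrow> (nat \<Rightarrow> nat \<Rightarrow> real) \<Rightarrow> real
    \<Rightarrow> (((nat \<Rightarrow> nat \<Rightarrow> real) \<times> (nat \<Rightarrow> real)) \<times> (nat \<Rightarrow> real)) measure" where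
  "data_measure d M \<Lambda> \<sigma> =
     (PiM {..<M} (\<lambda>_. gauss_vec d \<Lambda>) \<Otimes>\<^sub>M PiM {..<M} (\<lambda>_. normal_sigma \<sigma>)) \<Otimes>\<^sub>M gauss_vec d \<Lambda>"

definition icl_loss :: "nat \<Rightarrow> nat \<Rightarrow> (nat \<Rightarrow> nat \<Rightarrow> real) \<Rightarrow> real \<Rightarrow> (nat \<Rightarrow> real)
    \<Rightarrow> ((nat \<Rightarrow> nat \<Rightarrow> real) \<Rightarrow> real) \<Rightarrow> real" where
  "icl_loss d M \<Lambda> \<sigma> w f =
     (\<integral>((xs, eps), xq). (f (Ehat d M w xs eps xq) - (\<Sum>l<d. w l * xq l))\<^sup>2 \<partial>data_measure d M \<Lambda> \<sigma>)"

end

theory Submission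
  imports Defs
begin

(* The prediction error of f^(k) on E-hat is linear in the query: it equals <g, x_q> with
   g = Gamma_k^T h - w, where h = (1/M) sum_j y_j x_j and Gamma_k = Q V^(k) Q^T.  Integrating
   x_q out first gives L = E ||g||_Lambda^2 = sum_i lambda_i (v_i h_i - s_i)^2 with h_i = <Q e_i, h>.
   Raising the rank from r to r' only changes the coordinates r <= i < r', where s_i = 0, so the
   difference of the losses is sum_i lambda_i v_i^2 E[h_i^2].  By the Gaussian fourth-moment
   identity, E[<q, h>^2] = ((|w|_Lambda^2 + sigma^2) |q|_Lambda^2 + (M + 1) <w, q>_Lambda^2) / M,
   and <w, Q e_i>_Lambda = lambda_i s_i vanishes for i >= r. *)

section \<open>The standard normal distribution\<close>

lemma prob_space_std_normal: "prob_space std_normal"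
  unfolding std_normal_def by (rule prob_space_normal_density) simp

lemma sets_std_normal [measurable_cong, simp]: "sets std_normal = sets borel"
  unfolding std_normal_def by simp

lemma integrable_std_normal_power: "integrable std_normal (\<lambda>x. x ^ k)"
  unfolding std_normal_def
  by (subst integrable_density) (auto simp: integrable_std_normal_moment)

lemma std_normal_moments:
  "(\<integral>x. x \<partial>std_normal) = 0" "(\<integral>x. x ^ 2 \<partial>std_normal) = 1"
  "(\<integral>x. x ^ 3 \<partial>std_normal) = 0" "(\<integral>x. x ^ 4 \<partial>std_normal) = 3"
proof -
  have moment: "(\<integral>x. x ^ k \<partial>std_normal) = (\<integral>x. std_normal_density x * x ^ k \<partial>lborel)" for k
    unfolding std_normal_def by (subst integral_density) auto
  show "(\<integral>x. x \<partial>std_normal) = 0"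
    using moment[of 1] integral_std_normal_moment_odd[of 0] by simp
  show "(\<integral>x. x ^ 2 \<partial>std_normal) = 1"
    using moment[of 2] integral_std_normal_moment_even[of 1] by simp
  show "(\<integral>x. x ^ 3 \<partial>std_normal) = 0"
    using moment[of 3] integral_std_normal_moment_odd[of 1] by (simp add: numeral_eq_Suc)
  show "(\<integral>x. x ^ 4 \<partial>std_normal) = 3"
    using moment[of 4] integral_std_normal_moment_even[of 2] by (simp add: fact_numeral)
qed

lemma integral_std_normal_quartic:
  "(\<integral>y. c0 + c1 * y + c2 * y ^ 2 + c3 * y ^ 3 + c4 * y ^ 4 \<partial>std_normal) = c0 + c2 + 3 * c4"
proof -
  interpret prob_space std_normal by (rule prob_space_std_normal)
  have "has_bochner_integral std_normal (\<lambda>y. c0 + c1 * y ^ 1 + c2 * y ^ 2 + c3 * y ^ 3 + c4 * y ^ 4)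
     (c0 + c1 * (\<integral>y. y ^ 1 \<partial>std_normal) + c2 * (\<integral>y. y ^ 2 \<partial>std_normal)
      + c3 * (\<integral>y. y ^ 3 \<partial>std_normal) + c4 * (\<integral>y. y ^ 4 \<partial>std_normal))"
    by (intro has_bochner_integral_add has_bochner_integral_mult_right
        has_bochner_integral_integrable integrable_std_normal_power)
      (use prob_space in \<open>simp add: has_bochner_integral_iff\<close>)
  then show ?thesis
    using std_normal_moments by (simp add: has_bochner_integral_iff)
qed

lemma integral_std_normal_affine_mult:
  "(\<integral>y. (a + u * y) * (b + t * y) \<partial>std_normal) = a * b + u * t"
proof -
  have "(\<integral>y. (a + u * y) * (b + t * y) \<partial>std_normal)
      = (\<integral>y. a * b + (a * t + u * b) * y + (u * t) * y ^ 2 + 0 * y ^ 3 + 0 * y ^ 4 \<partial>std_normal)"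
    by (rule Bochner_Integration.integral_cong) (auto simp: algebra_simps power2_eq_square)
  also have "\<dots> = a * b + u * t + 3 * 0"
    by (rule integral_std_normal_quartic)
  finally show ?thesis by simp
qed

lemma integral_std_normal_affine_sq_mult_sq:
  "(\<integral>y. (a + u * y)\<^sup>2 * (b + t * y)\<^sup>2 \<partial>std_normal)
     = a\<^sup>2 * b\<^sup>2 + u\<^sup>2 * b\<^sup>2 + t\<^sup>2 * a\<^sup>2 + 4 * u * t * a * b + 3 * u\<^sup>2 * t\<^sup>2"
proof -
  have "(\<integral>y. (a + u * y)\<^sup>2 * (b + t * y)\<^sup>2 \<partial>std_normal)
      = (\<integral>y. a\<^sup>2 * b\<^sup>2 + (2 * a * b\<^sup>2 * u + 2 * a\<^sup>2 * b * t) * y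
            + (a\<^sup>2 * t\<^sup>2 + 4 * a * b * u * t + u\<^sup>2 * b\<^sup>2) * y ^ 2
            + (2 * a * u * t\<^sup>2 + 2 * u\<^sup>2 * b * t) * y ^ 3 + (u\<^sup>2 * t\<^sup>2) * y ^ 4 \<partial>std_normal)"
    by (rule Bochner_Integration.integral_cong)
      (auto simp: algebra_simps power2_eq_square power3_eq_cube power4_eq_xxxx)
  also have "\<dots> = a\<^sup>2 * b\<^sup>2 + (a\<^sup>2 * t\<^sup>2 + 4 * a * b * u * t + u\<^sup>2 * b\<^sup>2) + 3 * (u\<^sup>2 * t\<^sup>2)"
    by (rule integral_std_normal_quartic)
  finally show ?thesis by (simp add: algebra_simps)
qed

lemma has_bochner_integral_PiM_coord:
  fixes f :: "'a \<Rightarrow> real"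
  assumes "prob_space N" "i \<in> I" "integrable N f"
  shows "has_bochner_integral (PiM I (\<lambda>_. N)) (\<lambda>\<omega>. f (\<omega> i)) (integral\<^sup>L N f)"
proof -
  have coord: "distr (PiM I (\<lambda>_. N)) N (\<lambda>\<omega>. \<omega> i) = N"
    using assms by (intro distr_PiM_component)
  have meas: "(\<lambda>\<omega>. \<omega> i) \<in> PiM I (\<lambda>_. N) \<rightarrow>\<^sub>M N"
    using assms(2) by (rule measurable_component_singleton)
  show ?thesis
    using assms(3) integrable_distr_eq[OF meas, of f] integral_distr[OF meas, of f]
    by (simp add: coord has_bochner_integral_iff)
qed

lemma has_bochner_integral_PiM_coord_pair:
  fixes f g :: "'a \<Rightarrow> real"
  assumes N: "prob_space N" and I: "finite I" "i \<in> I" "j \<in> I" "i \<noteq> j"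
    and f: "integrable N f" and g: "integrable N g"
  shows "has_bochner_integral (PiM I (\<lambda>_. N)) (\<lambda>\<omega>. f (\<omega> i) * g (\<omega> j))
           (integral\<^sup>L N f * integral\<^sup>L N g)"
proof -
  interpret prob_space N by (fact N)
  interpret product_sigma_finite "\<lambda>_. N"
    by (simp add: product_sigma_finite_def prob_space_imp_sigma_finite N)
  let ?F = "\<lambda>k. if k = i then f else if k = j then g else (\<lambda>_. 1)"
  have F: "\<And>k. k \<in> I \<Longrightarrow> integrable N (?F k)"
    using f g by auto
  have prod_F: "(\<Prod>k\<in>I. ?F k (\<omega> k)) = f (\<omega> i) * g (\<omega> j)" for \<omega>
  proof -
    have "(\<Prod>k\<in>I. ?F k (\<omega> k))
        = (\<Prod>k\<in>I. (if k = i then f (\<omega> k) else 1) * (if k = j then g (\<omega> k) else 1))"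
      using I by (intro prod.cong) auto
    then show ?thesis using I by (simp add: prod.distrib)
  qed
  have "(\<Prod>k\<in>I. integral\<^sup>L N (?F k))
      = (\<Prod>k\<in>I. (if k = i then integral\<^sup>L N f else 1) * (if k = j then integral\<^sup>L N g else 1))"
    using I by (intro prod.cong) (auto simp: prob_space)
  also have "\<dots> = integral\<^sup>L N f * integral\<^sup>L N g"
    using I by (simp add: prod.distrib)
  finally have "(\<Prod>k\<in>I. integral\<^sup>L N (?F k)) = integral\<^sup>L N f * integral\<^sup>L N g" .
  then show ?thesis
    using product_integrable_prod[OF I(1), of ?F] product_integral_prod[OF I(1), of ?F] F
    by (simp add: prod_F has_bochner_integral_iff)
qed

lemma has_bochner_integral_PiM_coords:
  fixes f g :: "'a \<Rightarrow> real"
  assumes "prob_space N" "finite I" "i \<in> I" "j \<in> I"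
    and "integrable N f" "integrable N g" "integrable N (\<lambda>x. f x * g x)"
  shows "has_bochner_integral (PiM I (\<lambda>_. N)) (\<lambda>\<omega>. f (\<omega> i) * g (\<omega> j))
           (if i = j then \<integral>x. f x * g x \<partial>N else integral\<^sup>L N f * integral\<^sup>L N g)"
  using assms has_bochner_integral_PiM_coord[of N i I "\<lambda>x. f x * g x"]
    has_bochner_integral_PiM_coord_pair[of N I i j f g]
  by auto

lemma has_bochner_integral_pair_measure_mult:
  fixes f :: "'a \<Rightarrow> real" and g :: "'b \<Rightarrow> real"
  assumes "sigma_finite_measure MA" "sigma_finite_measure MB"
    and f: "has_bochner_integral MA f a" and g: "has_bochner_integral MB g b"
  shows "has_bochner_integral (MA \<Otimes>\<^sub>M MB) (\<lambda>p. f (fst p) * g (snd p)) (a * b)"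
proof -
  interpret pair_sigma_finite MA MB
    using assms(1,2) by (simp add: pair_sigma_finite_def)
  have [measurable]: "f \<in> borel_measurable MA" "g \<in> borel_measurable MB"
    using f g by (auto simp: has_bochner_integral_iff)
  have "(\<integral>\<^sup>+ p. ennreal (norm (f (fst p) * g (snd p))) \<partial>(MA \<Otimes>\<^sub>M MB))
      = (\<integral>\<^sup>+ x. \<integral>\<^sup>+ y. ennreal (norm (f x)) * ennreal (norm (g y)) \<partial>MB \<partial>MA)"
    by (subst M2.nn_integral_fst[symmetric]) (auto simp: abs_mult ennreal_mult)
  also have "\<dots> = (\<integral>\<^sup>+ x. ennreal (norm (f x)) \<partial>MA) * (\<integral>\<^sup>+ y. ennreal (norm (g y)) \<partial>MB)"
    by (simp add: nn_integral_cmult nn_integral_multc)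
  also have "\<dots> < \<infinity>"
    using f g by (simp add: has_bochner_integral_iff integrable_iff_bounded ennreal_mult_less_top)
  finally have int: "integrable (MA \<Otimes>\<^sub>M MB) (\<lambda>p. f (fst p) * g (snd p))"
    by (simp add: integrable_iff_bounded)
  then show ?thesis
    using integral_fst'[OF int] f g by (simp add: has_bochner_integral_iff)
qed

section \<open>Standard Gaussian vectors\<close>

abbreviation std_gaussian :: "'i set \<Rightarrow> ('i \<Rightarrow> real) measure" where
  "std_gaussian I \<equiv> PiM I (\<lambda>_. std_normal)"

definition linform :: "'i set \<Rightarrow> ('i \<Rightarrow> real) \<Rightarrow> ('i \<Rightarrow> real) \<Rightarrow> real" where
  "linform I a x = (\<Sum>i\<in>I. a i * x i)"

lemma measurable_linform [measurable]: "linform I a \<in> borel_measurable (PiM I (\<lambda>_. borel))"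
  unfolding linform_def by measurable

lemma prob_space_std_gaussian: "prob_space (std_gaussian I)"
  by (intro prob_space_PiM prob_space_std_normal)

lemma product_sigma_finite_std_normal: "product_sigma_finite (\<lambda>_. std_normal)"
  by (simp add: product_sigma_finite_def prob_space_imp_sigma_finite prob_space_std_normal)

lemma prod_list_map_eq_prod_count:
  assumes "finite I" "set as \<subseteq> I"
  shows "prod_list (map f as) = (\<Prod>i\<in>I. f i ^ count_list as i)"
  using assms(2)
proof (induction as)
  case (Cons a as)
  have "(\<Prod>i\<in>I. f i ^ count_list (a # as) i)
      = (\<Prod>i\<in>I. f i ^ count_list as i * (if a = i then f i else 1))"
    by (intro prod.cong) (auto simp: mult.commute)
  also have "\<dots> = (\<Prod>i\<in>I. f i ^ count_list as i) * f a"
    using Cons.prems assms(1) by (simp add: prod.distrib prod.delta)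
  finally show ?case using Cons by (simp add: mult.commute)
qed simp

lemma integrable_std_gaussian_monomial_mult_linform_prod:
  assumes "finite I" "set as \<subseteq> I"
  shows "integrable (std_gaussian I) (\<lambda>z. prod_list (map z as) * prod_list (map (\<lambda>u. linform I u z) us))"
  using assms(2)
proof (induction us arbitrary: as)
  case Nil
  interpret product_sigma_finite "\<lambda>_. std_normal" by (rule product_sigma_finite_std_normal)
  have "integrable (std_gaussian I) (\<lambda>z. \<Prod>i\<in>I. z i ^ count_list as i)"
    using product_integrable_prod[OF assms(1), of "\<lambda>i x. x ^ count_list as i"]
    by (simp add: integrable_std_normal_power)
  then show ?case by (simp add: prod_list_map_eq_prod_count[OF assms(1) Nil])
next
  case (Cons u us)
  have "integrable (std_gaussian I)
      (\<lambda>z. \<Sum>i\<in>I. u i * (prod_list (map z (i # as)) * prod_list (map (\<lambda>u. linform I u z) us)))"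
    using Cons by (intro Bochner_Integration.integrable_sum integrable_mult_right Cons.IH) auto
  then show ?case
    by (simp add: linform_def sum_distrib_left sum_distrib_right ac_simps)
qed

lemma integrable_std_gaussian_linform_prod:
  "finite I \<Longrightarrow> integrable (std_gaussian I) (\<lambda>z. prod_list (map (\<lambda>u. linform I u z) us))"
  using integrable_std_gaussian_monomial_mult_linform_prod[of I "[]" us] by simp

lemma integrable_std_gaussian_linforms:
  assumes "finite I"
  shows "integrable (std_gaussian I) (\<lambda>z. linform I a z * linform I b z)"
    and "integrable (std_gaussian I) (\<lambda>z. (linform I a z)\<^sup>2 * (linform I b z)\<^sup>2)"
  using integrable_std_gaussian_linform_prod[OF assms, of "[a, b]"]
    integrable_std_gaussian_linform_prod[OF assms, of "[a, a, b, b]"]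
  by (simp_all add: power2_eq_square ac_simps)

lemma linform_insert_upd:
  assumes "finite I" "i \<notin> I"
  shows "linform (insert i I) a (z(i := y)) = linform I a z + a i * y"
proof -
  have "(\<Sum>k\<in>I. a k * (z(i := y)) k) = (\<Sum>k\<in>I. a k * z k)"
    using assms by (intro sum.cong) auto
  then show ?thesis using assms by (simp add: linform_def add.commute)
qed

lemma integral_std_gaussian_linform_mult:
  assumes "finite I"
  shows "(\<integral>z. linform I a z * linform I b z \<partial>std_gaussian I) = linform I a b"
  using assms
proof (induction I rule: finite_induct)
  case (insert i I)
  interpret product_sigma_finite "\<lambda>_. std_normal" by (rule product_sigma_finite_std_normal)
  interpret prob_space "std_gaussian I" by (rule prob_space_std_gaussian)
  have "(\<integral>z. linform (insert i I) a z * linform (insert i I) b z \<partial>std_gaussian (insert i I))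
      = (\<integral>z. (\<integral>y. (linform I a z + a i * y) * (linform I b z + b i * y) \<partial>std_normal) \<partial>std_gaussian I)"
    using product_integral_insert[OF insert(1,2) integrable_std_gaussian_linforms(1)] insert
    by (simp add: linform_insert_upd)
  also have "\<dots> = (\<integral>z. linform I a z * linform I b z + a i * b i \<partial>std_gaussian I)"
    by (simp only: integral_std_normal_affine_mult)
  also have "\<dots> = linform I a b + a i * b i"
    using insert integrable_std_gaussian_linforms(1)[OF insert(1)] by (simp add: prob_space)
  finally show ?case
    using insert by (simp add: linform_def)
qed (simp add: linform_def)

lemma integral_std_gaussian_linform_sq_mult_sq:
  assumes "finite I"
  shows "(\<integral>z. (linform I a z)\<^sup>2 * (linform I b z)\<^sup>2 \<partial>std_gaussian I)
       = linform I a a * linform I b b + 2 * (linform I a b)\<^sup>2"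
  using assms
proof (induction I rule: finite_induct)
  case (insert i I)
  interpret product_sigma_finite "\<lambda>_. std_normal" by (rule product_sigma_finite_std_normal)
  interpret prob_space "std_gaussian I" by (rule prob_space_std_gaussian)
  let ?A = "linform I a" and ?B = "linform I b"
  have "(\<integral>z. (linform (insert i I) a z)\<^sup>2 * (linform (insert i I) b z)\<^sup>2 \<partial>std_gaussian (insert i I))
      = (\<integral>z. (\<integral>y. (?A z + a i * y)\<^sup>2 * (?B z + b i * y)\<^sup>2 \<partial>std_normal) \<partial>std_gaussian I)"
    using product_integral_insert[OF insert(1,2) integrable_std_gaussian_linforms(2)] insert
    by (simp add: linform_insert_upd)
  also have "\<dots> = (\<integral>z. (?A z)\<^sup>2 * (?B z)\<^sup>2 + (a i)\<^sup>2 * (?B z * ?B z) + (b i)\<^sup>2 * (?A z * ?A z)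
                       + (4 * a i * b i) * (?A z * ?B z) + 3 * (a i)\<^sup>2 * (b i)\<^sup>2 \<partial>std_gaussian I)"
    by (simp only: integral_std_normal_affine_sq_mult_sq) (simp add: power2_eq_square algebra_simps)
  also have "\<dots> = (\<integral>z. (?A z)\<^sup>2 * (?B z)\<^sup>2 \<partial>std_gaussian I)
                  + (a i)\<^sup>2 * (\<integral>z. ?B z * ?B z \<partial>std_gaussian I)
                  + (b i)\<^sup>2 * (\<integral>z. ?A z * ?A z \<partial>std_gaussian I)
                  + (4 * a i * b i) * (\<integral>z. ?A z * ?B z \<partial>std_gaussian I) + 3 * (a i)\<^sup>2 * (b i)\<^sup>2"
    using integrable_std_gaussian_linforms[OF insert(1)] by (simp add: prob_space)
  also have "\<dots> = linform (insert i I) a a * linform (insert i I) b b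
                  + 2 * (linform (insert i I) a b)\<^sup>2"
    using insert integral_std_gaussian_linform_mult[OF insert(1), of a b]
      integral_std_gaussian_linform_mult[OF insert(1), of a a]
      integral_std_gaussian_linform_mult[OF insert(1), of b b]
    by (simp add: linform_def algebra_simps power2_eq_square)
  finally show ?case .
qed (simp add: linform_def)

section \<open>Gaussian vectors with covariance \<Lambda>\<close>

definition qform :: "nat \<Rightarrow> (nat \<Rightarrow> nat \<Rightarrow> real) \<Rightarrow> (nat \<Rightarrow> real) \<Rightarrow> (nat \<Rightarrow> real) \<Rightarrow> real" where
  "qform d \<Lambda> a b = (\<Sum>i<d. \<Sum>j<d. a i * \<Lambda> i j * b j)"

definition gram_root :: "nat \<Rightarrow> (nat \<Rightarrow> nat \<Rightarrow> real) \<Rightarrow> nat \<Rightarrow> nat \<Rightarrow> real" where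
  "gram_root d \<Lambda> = (SOME A. \<forall>i<d. \<forall>j<d. (\<Sum>l<d. A i l * A j l) = \<Lambda> i j)"

definition matvec :: "nat \<Rightarrow> (nat \<Rightarrow> nat \<Rightarrow> real) \<Rightarrow> (nat \<Rightarrow> real) \<Rightarrow> nat \<Rightarrow> real" where
  "matvec d A z = restrict (\<lambda>i. \<Sum>l<d. A i l * z l) {..<d}"

lemma gauss_vec_eq_distr:
  "gauss_vec d \<Lambda> = distr (std_gaussian {..<d}) (PiM {..<d} (\<lambda>_. borel)) (matvec d (gram_root d \<Lambda>))"
  unfolding gauss_vec_def Let_def matvec_def gram_root_def ..

lemma measurable_matvec [measurable]:
  "matvec d A \<in> std_gaussian {..<d} \<rightarrow>\<^sub>M PiM {..<d} (\<lambda>_. borel)"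
  unfolding matvec_def by measurable

lemma sets_gauss_vec [measurable_cong]: "sets (gauss_vec d \<Lambda>) = sets (PiM {..<d} (\<lambda>_. borel))"
  unfolding gauss_vec_eq_distr by simp

lemma prob_space_gauss_vec: "prob_space (gauss_vec d \<Lambda>)"
  unfolding gauss_vec_eq_distr
  by (rule prob_space.prob_space_distr[OF prob_space_std_gaussian measurable_matvec])

lemma linform_matvec:
  "linform {..<d} a (matvec d A z) = linform {..<d} (\<lambda>l. \<Sum>i<d. a i * A i l) z"
proof -
  have "linform {..<d} a (matvec d A z) = (\<Sum>i<d. \<Sum>l<d. a i * A i l * z l)"
    unfolding linform_def matvec_def by (simp add: sum_distrib_left mult.assoc)
  also have "\<dots> = linform {..<d} (\<lambda>l. \<Sum>i<d. a i * A i l) z"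
    unfolding linform_def by (subst sum.swap) (simp add: sum_distrib_right)
  finally show ?thesis .
qed

lemma integrable_gauss_vec_linform_prod:
  "integrable (gauss_vec d \<Lambda>) (\<lambda>x. prod_list (map (\<lambda>a. linform {..<d} a x) as))"
proof -
  let ?A = "gram_root d \<Lambda>"
  have [measurable]: "(\<lambda>x. prod_list (map (\<lambda>a. linform {..<d} a x) as))
      \<in> borel_measurable (PiM {..<d} (\<lambda>_. borel))"
    by (induction as) auto
  have transposed: "prod_list (map (\<lambda>a. linform {..<d} a (matvec d ?A z)) as)
      = prod_list (map (\<lambda>u. linform {..<d} u z) (map (\<lambda>a l. \<Sum>i<d. a i * ?A i l) as))" for z
    by (induction as) (simp_all add: linform_matvec)
  have "integrable (std_gaussian {..<d})
      (\<lambda>z. prod_list (map (\<lambda>a. linform {..<d} a (matvec d ?A z)) as))"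
    unfolding transposed by (rule integrable_std_gaussian_linform_prod) simp
  then show ?thesis
    unfolding gauss_vec_eq_distr by (subst integrable_distr_eq) auto
qed

lemma integral_gauss_vec:
  fixes f :: "(nat \<Rightarrow> real) \<Rightarrow> real"
  assumes "f \<in> borel_measurable (PiM {..<d} (\<lambda>_. borel))"
  shows "integral\<^sup>L (gauss_vec d \<Lambda>) f = (\<integral>z. f (matvec d (gram_root d \<Lambda>) z) \<partial>std_gaussian {..<d})"
  unfolding gauss_vec_eq_distr using assms by (rule integral_distr[OF measurable_matvec])

(* Only A A^T = \<Lambda> enters the moments below, so the arbitrary factor chosen by SOME in
   gauss_vec is harmless. *)
locale gram_factorable =
  fixes d :: nat and \<Lambda> :: "nat \<Rightarrow> nat \<Rightarrow> real"
  assumes gram_factor_exists: "\<exists>A. \<forall>i<d. \<forall>j<d. (\<Sum>l<d. A i l * A j l) = \<Lambda> i j"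
begin

lemma gram_root_gram: "i < d \<Longrightarrow> j < d \<Longrightarrow> (\<Sum>l<d. gram_root d \<Lambda> i l * gram_root d \<Lambda> j l) = \<Lambda> i j"
  using someI_ex[OF gram_factor_exists] unfolding gram_root_def by blast

lemma linform_transpose_gram_root:
  "linform {..<d} (\<lambda>l. \<Sum>i<d. a i * gram_root d \<Lambda> i l) (\<lambda>l. \<Sum>j<d. b j * gram_root d \<Lambda> j l)
     = qform d \<Lambda> a b"
proof -
  let ?A = "gram_root d \<Lambda>"
  have "linform {..<d} (\<lambda>l. \<Sum>i<d. a i * ?A i l) (\<lambda>l. \<Sum>j<d. b j * ?A j l)
      = (\<Sum>l<d. \<Sum>i<d. \<Sum>j<d. a i * b j * (?A i l * ?A j l))"
    unfolding linform_def sum_product by (intro sum.cong refl) (simp add: ac_simps)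
  also have "\<dots> = (\<Sum>i<d. \<Sum>l<d. \<Sum>j<d. a i * b j * (?A i l * ?A j l))"
    by (rule sum.swap)
  also have "\<dots> = (\<Sum>i<d. \<Sum>j<d. a i * b j * (\<Sum>l<d. ?A i l * ?A j l))"
    by (simp add: sum_distrib_left) (intro sum.cong refl sum.swap)
  also have "\<dots> = qform d \<Lambda> a b"
    unfolding qform_def by (intro sum.cong refl) (simp add: gram_root_gram ac_simps)
  finally show ?thesis .
qed

lemma qform_nonneg: "0 \<le> qform d \<Lambda> a a"
proof -
  have "0 \<le> linform {..<d} v v" for v
    by (simp add: linform_def sum_nonneg)
  then show ?thesis
    by (metis linform_transpose_gram_root)
qed

lemma integral_gauss_vec_linform_mult:
  "(\<integral>x. linform {..<d} a x * linform {..<d} b x \<partial>gauss_vec d \<Lambda>) = qform d \<Lambda> a b"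
  by (subst integral_gauss_vec)
    (auto simp: linform_matvec integral_std_gaussian_linform_mult linform_transpose_gram_root)

lemma integral_gauss_vec_linform_sq_mult_sq:
  "(\<integral>x. (linform {..<d} a x)\<^sup>2 * (linform {..<d} b x)\<^sup>2 \<partial>gauss_vec d \<Lambda>)
     = qform d \<Lambda> a a * qform d \<Lambda> b b + 2 * (qform d \<Lambda> a b)\<^sup>2"
  by (subst integral_gauss_vec)
    (auto simp: linform_matvec integral_std_gaussian_linform_sq_mult_sq linform_transpose_gram_root)

end

lemma sets_normal_sigma [measurable_cong, simp]: "sets (normal_sigma \<sigma>) = sets borel"
  unfolding normal_sigma_def by simp

lemma prob_space_normal_sigma: "prob_space (normal_sigma \<sigma>)"
  unfolding normal_sigma_def by (rule prob_space.prob_space_distr[OF prob_space_std_normal]) simp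

lemma integrable_normal_sigma_power: "integrable (normal_sigma \<sigma>) (\<lambda>e. e ^ k)"
  unfolding normal_sigma_def
  by (subst integrable_distr_eq) (auto simp: power_mult_distrib intro: integrable_std_normal_power)

lemma normal_sigma_moments:
  "(\<integral>e. e \<partial>normal_sigma \<sigma>) = 0" "(\<integral>e. e * e \<partial>normal_sigma \<sigma>) = \<sigma>\<^sup>2"
  unfolding normal_sigma_def
  by (subst integral_distr; simp add: std_normal_moments power2_eq_square[symmetric] power_mult_distrib)+

lemma integrable_normal_sigma_id: "integrable (normal_sigma \<sigma>) (\<lambda>e. e)"
  using integrable_normal_sigma_power[of \<sigma> 1] by simp

lemma has_bochner_integral_noise_coord:
  fixes j M :: nat
  assumes "j < M"
  shows "has_bochner_integral (PiM {..<M} (\<lambda>_. normal_sigma \<sigma>)) (\<lambda>e. e j) 0"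
  using has_bochner_integral_PiM_coord[OF prob_space_normal_sigma lessThan_iff[THEN iffD2, OF assms]
      integrable_normal_sigma_id]
  by (simp add: normal_sigma_moments)

lemma has_bochner_integral_noise_coords:
  fixes j j' M :: nat
  assumes "j < M" "j' < M"
  shows "has_bochner_integral (PiM {..<M} (\<lambda>_. normal_sigma \<sigma>)) (\<lambda>e. e j * e j')
           (if j = j' then \<sigma>\<^sup>2 else 0)"
proof -
  have "integrable (normal_sigma \<sigma>) (\<lambda>e. e * e)"
    using integrable_normal_sigma_power[of \<sigma> 2] by (simp add: power2_eq_square)
  then show ?thesis
    using has_bochner_integral_PiM_coords[OF prob_space_normal_sigma[of \<sigma>] finite_lessThan
        lessThan_iff[THEN iffD2, OF assms(1)] lessThan_iff[THEN iffD2, OF assms(2)]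
        integrable_normal_sigma_id integrable_normal_sigma_id]
    by (cases "j = j'") (simp_all add: normal_sigma_moments)
qed

abbreviation prompt_measure ::
    "nat \<Rightarrow> nat \<Rightarrow> (nat \<Rightarrow> nat \<Rightarrow> real) \<Rightarrow> real \<Rightarrow> ((nat \<Rightarrow> nat \<Rightarrow> real) \<times> (nat \<Rightarrow> real)) measure" where
  "prompt_measure d M \<Lambda> \<sigma> \<equiv> PiM {..<M} (\<lambda>_. gauss_vec d \<Lambda>) \<Otimes>\<^sub>M PiM {..<M} (\<lambda>_. normal_sigma \<sigma>)"

lemma prob_space_prompt_measure: "prob_space (prompt_measure d M \<Lambda> \<sigma>)"
  by (intro prob_space_pair prob_space_PiM prob_space_gauss_vec prob_space_normal_sigma)

lemma measurable_prompt_x [measurable]: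
  "j \<in> {..<M} \<Longrightarrow> i \<in> {..<d} \<Longrightarrow> (\<lambda>p. fst p j i) \<in> borel_measurable (prompt_measure d M \<Lambda> \<sigma>)"
proof -
  assume j: "j \<in> {..<M}" and i: "i \<in> {..<d}"
  have "(\<lambda>xs. xs j) \<in> PiM {..<M} (\<lambda>_. gauss_vec d \<Lambda>) \<rightarrow>\<^sub>M gauss_vec d \<Lambda>"
    using j by (rule measurable_component_singleton)
  moreover have "(\<lambda>x. x i) \<in> gauss_vec d \<Lambda> \<rightarrow>\<^sub>M borel"
    using i by (subst measurable_cong_sets[OF sets_gauss_vec refl]) (rule measurable_component_singleton)
  ultimately have "(\<lambda>xs. xs j i) \<in> borel_measurable (PiM {..<M} (\<lambda>_. gauss_vec d \<Lambda>))"
    by (rule measurable_compose)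
  then show ?thesis
    using measurable_compose[OF measurable_fst] by simp
qed

lemma measurable_prompt_noise [measurable]:
  "j \<in> {..<M} \<Longrightarrow> (\<lambda>p. snd p j) \<in> borel_measurable (prompt_measure d M \<Lambda> \<sigma>)"
proof -
  assume "j \<in> {..<M}"
  then have "(\<lambda>e. e j) \<in> PiM {..<M} (\<lambda>_. normal_sigma \<sigma>) \<rightarrow>\<^sub>M normal_sigma \<sigma>"
    by (rule measurable_component_singleton)
  then have "(\<lambda>e. e j) \<in> borel_measurable (PiM {..<M} (\<lambda>_. normal_sigma \<sigma>))"
    by (subst measurable_cong_sets[OF refl sets_normal_sigma[symmetric]])
  then show ?thesis
    using measurable_compose[OF measurable_snd] by simp
qed

definition label :: "nat \<Rightarrow> (nat \<Rightarrow> real) \<Rightarrow> (nat \<Rightarrow> nat \<Rightarrow> real) \<times> (nat \<Rightarrow> real) \<Rightarrow> nat \<Rightarrow> real" where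
  "label d w p j = linform {..<d} w (fst p j) + snd p j"

definition label_moment ::
    "nat \<Rightarrow> nat \<Rightarrow> (nat \<Rightarrow> real) \<Rightarrow> (nat \<Rightarrow> nat \<Rightarrow> real) \<times> (nat \<Rightarrow> real) \<Rightarrow> nat \<Rightarrow> real" where
  "label_moment d M w p l = (1 / real M) * (\<Sum>j<M. label d w p j * fst p j l)"

lemma linform_label_moment:
  "linform {..<d} q (label_moment d M w p) = (1 / real M) * (\<Sum>j<M. label d w p j * linform {..<d} q (fst p j))"
  unfolding label_moment_def linform_def
  by (simp add: sum_distrib_left sum_distrib_right ac_simps sum.swap[of _ "{..<d}" "{..<M}"])

context gram_factorable
begin

lemma has_bochner_integral_label_proj_mult:
  assumes "j < M" "j' < M"
  shows "has_bochner_integral (prompt_measure d M \<Lambda> \<sigma>)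
    (\<lambda>p. (label d w p j * linform {..<d} q (fst p j)) * (label d w p j' * linform {..<d} q (fst p j')))
    (if j = j' then qform d \<Lambda> w w * qform d \<Lambda> q q + 2 * (qform d \<Lambda> w q)\<^sup>2 + \<sigma>\<^sup>2 * qform d \<Lambda> q q
     else (qform d \<Lambda> w q)\<^sup>2)"
proof -
  let ?X = "PiM {..<M} (\<lambda>_. gauss_vec d \<Lambda>)" and ?E = "PiM {..<M} (\<lambda>_. normal_sigma \<sigma>)"
  let ?G = "gauss_vec d \<Lambda>" and ?q = "linform {..<d} q"
  define wq where "wq = (\<lambda>x. linform {..<d} w x * ?q x)"
  have sf: "sigma_finite_measure ?X" "sigma_finite_measure ?E"
    by (intro prob_space_imp_sigma_finite prob_space_PiM prob_space_gauss_vec prob_space_normal_sigma)+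
  have int: "integrable ?G f" if "f \<in> {wq, ?q, \<lambda>x. wq x * wq x, \<lambda>x. wq x * ?q x, \<lambda>x. ?q x * wq x,
      \<lambda>x. ?q x * ?q x}" for f
    using that integrable_gauss_vec_linform_prod[of d \<Lambda> "[w, q]"]
      integrable_gauss_vec_linform_prod[of d \<Lambda> "[q]"]
      integrable_gauss_vec_linform_prod[of d \<Lambda> "[w, q, w, q]"]
      integrable_gauss_vec_linform_prod[of d \<Lambda> "[w, q, q]"]
      integrable_gauss_vec_linform_prod[of d \<Lambda> "[q, q]"]
    by (auto simp: wq_def ac_simps)
  let ?m = "\<lambda>f g. if j = j' then \<integral>x. f x * g x \<partial>?G else integral\<^sup>L ?G f * integral\<^sup>L ?G g"
  have X: "has_bochner_integral ?X (\<lambda>xs. f (xs j) * g (xs j')) (?m f g)"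
    if "f \<in> {wq, ?q}" "g \<in> {wq, ?q}" for f g
    using that assms by (intro has_bochner_integral_PiM_coords prob_space_gauss_vec int) auto
  interpret E: prob_space ?E by (intro prob_space_PiM prob_space_normal_sigma)
  have E1: "has_bochner_integral ?E (\<lambda>_. 1 :: real) 1"
    by (simp add: has_bochner_integral_iff E.prob_space)
  \<comment> \<open>Expanding the labels y = <w, x> + \<epsilon> splits the integrand into four products of a
    function of the inputs and a function of the noise.\<close>
  have "(\<lambda>p. (label d w p j * ?q (fst p j)) * (label d w p j' * ?q (fst p j')))
      = (\<lambda>p. wq (fst p j) * wq (fst p j') * 1 + wq (fst p j) * ?q (fst p j') * snd p j'
         + ?q (fst p j) * wq (fst p j') * snd p j + ?q (fst p j) * ?q (fst p j') * (snd p j * snd p j'))"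
    by (simp add: fun_eq_iff label_def wq_def algebra_simps)
  moreover have "has_bochner_integral (prompt_measure d M \<Lambda> \<sigma>)
      (\<lambda>p. wq (fst p j) * wq (fst p j') * 1 + wq (fst p j) * ?q (fst p j') * snd p j'
         + ?q (fst p j) * wq (fst p j') * snd p j + ?q (fst p j) * ?q (fst p j') * (snd p j * snd p j'))
      (?m wq wq * 1 + ?m wq ?q * 0 + ?m ?q wq * 0 + ?m ?q ?q * (if j = j' then \<sigma>\<^sup>2 else 0))"
    by (intro has_bochner_integral_add has_bochner_integral_pair_measure_mult[OF sf] X E1
        has_bochner_integral_noise_coord has_bochner_integral_noise_coords assms) auto
  moreover have "?m wq wq * 1 + ?m wq ?q * 0 + ?m ?q wq * 0 + ?m ?q ?q * (if j = j' then \<sigma>\<^sup>2 else 0)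
      = (if j = j' then qform d \<Lambda> w w * qform d \<Lambda> q q + 2 * (qform d \<Lambda> w q)\<^sup>2 + \<sigma>\<^sup>2 * qform d \<Lambda> q q
         else (qform d \<Lambda> w q)\<^sup>2)"
    using integral_gauss_vec_linform_sq_mult_sq[of w q] integral_gauss_vec_linform_mult[of w q]
      integral_gauss_vec_linform_mult[of q q]
    by (simp add: wq_def power2_eq_square ac_simps)
  ultimately show ?thesis
    by simp
qed

lemma has_bochner_integral_label_moment_proj_sq:
  assumes "M \<ge> 1"
  shows "has_bochner_integral (prompt_measure d M \<Lambda> \<sigma>) (\<lambda>p. (linform {..<d} q (label_moment d M w p))\<^sup>2)
    (((qform d \<Lambda> w w + \<sigma>\<^sup>2) * qform d \<Lambda> q q + (real M + 1) * (qform d \<Lambda> w q)\<^sup>2) / real M)"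
proof -
  let ?Y = "\<lambda>j p. label d w p j * linform {..<d} q (fst p j)"
  let ?A = "qform d \<Lambda> w w * qform d \<Lambda> q q + 2 * (qform d \<Lambda> w q)\<^sup>2 + \<sigma>\<^sup>2 * qform d \<Lambda> q q"
  let ?B = "(qform d \<Lambda> w q)\<^sup>2"
  have square: "(\<lambda>p. (linform {..<d} q (label_moment d M w p))\<^sup>2)
      = (\<lambda>p. (1 / real M)\<^sup>2 * (\<Sum>j<M. \<Sum>j'<M. ?Y j p * ?Y j' p))"
    by (simp add: fun_eq_iff linform_label_moment power_mult_distrib sum_product power2_eq_square)
  have row: "(\<Sum>j'<M. if j = j' then ?A else ?B) = ?A + (real M - 1) * ?B" if "j < M" for j
  proof -
    have "(\<Sum>j'<M. if j = j' then ?A else ?B) = (\<Sum>j'<M. ?B + (if j = j' then ?A - ?B else 0))"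
      by (intro sum.cong) auto
    also have "\<dots> = real M * ?B + (?A - ?B)"
      using that by (simp add: sum.distrib)
    finally show ?thesis
      by (simp add: algebra_simps)
  qed
  have "(1 / real M)\<^sup>2 * (\<Sum>j<M. \<Sum>j'<M. if j = j' then ?A else ?B)
      = (1 / real M)\<^sup>2 * (real M * (?A + (real M - 1) * ?B))"
    by (simp add: row)
  also have "\<dots> = ((qform d \<Lambda> w w + \<sigma>\<^sup>2) * qform d \<Lambda> q q + (real M + 1) * ?B) / real M"
    using assms by (simp add: field_simps power2_eq_square)
  finally have total: "(1 / real M)\<^sup>2 * (\<Sum>j<M. \<Sum>j'<M. if j = j' then ?A else ?B)
      = ((qform d \<Lambda> w w + \<sigma>\<^sup>2) * qform d \<Lambda> q q + (real M + 1) * ?B) / real M" .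
  have "has_bochner_integral (prompt_measure d M \<Lambda> \<sigma>)
      (\<lambda>p. (1 / real M)\<^sup>2 * (\<Sum>j<M. \<Sum>j'<M. ?Y j p * ?Y j' p))
      ((1 / real M)\<^sup>2 * (\<Sum>j<M. \<Sum>j'<M. if j = j' then ?A else ?B))"
    by (intro has_bochner_integral_mult_right has_bochner_integral_sum has_bochner_integral_label_proj_mult)
      auto
  then show ?thesis
    unfolding square total .
qed

lemma integrable_weighted_residual_sum:
  assumes "M \<ge> 1"
  shows "integrable (prompt_measure d M \<Lambda> \<sigma>)
    (\<lambda>p. \<Sum>i\<in>I. a i * (v i * linform {..<d} (q i) (label_moment d M w p) - s i)\<^sup>2)"
proof -
  let ?P = "prompt_measure d M \<Lambda> \<sigma>" and ?h = "\<lambda>i p. linform {..<d} (q i) (label_moment d M w p)"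
  interpret P: prob_space ?P by (rule prob_space_prompt_measure)
  have sq: "integrable ?P (\<lambda>p. (?h i p)\<^sup>2)" for i
    using has_bochner_integral_label_moment_proj_sq[OF assms, where q="q i"]
    by (simp add: has_bochner_integral_iff)
  have [measurable]: "?h i \<in> borel_measurable ?P" for i
    unfolding linform_def label_moment_def label_def by measurable
  have "integrable ?P (?h i)" for i
    by (rule P.square_integrable_imp_integrable[OF _ sq]) measurable
  then have "integrable ?P (\<lambda>p. \<Sum>i\<in>I. (a i * (v i)\<^sup>2) * (?h i p)\<^sup>2 + (- 2 * a i * v i * s i) * ?h i p
      + a i * (s i)\<^sup>2)"
    by (intro Bochner_Integration.integrable_sum Bochner_Integration.integrable_add
        integrable_mult_right sq P.integrable_const)
  then show ?thesis
    by (simp add: power2_eq_square algebra_simps)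
qed

end

section \<open>The linear self-attention model on a prompt\<close>

(* Q diag(v) Q^T, the upper-left block of WKQ d Q v c divided by c. *)
definition eig_matrix :: "nat \<Rightarrow> (nat \<Rightarrow> nat \<Rightarrow> real) \<Rightarrow> (nat \<Rightarrow> real) \<Rightarrow> nat \<Rightarrow> nat \<Rightarrow> real" where
  "eig_matrix d Q v l m = (\<Sum>p<d. Q l p * v p * Q m p)"

definition weight_error ::
    "nat \<Rightarrow> nat \<Rightarrow> (nat \<Rightarrow> real) \<Rightarrow> (nat \<Rightarrow> nat \<Rightarrow> real) \<Rightarrow> (nat \<Rightarrow> nat \<Rightarrow> real) \<times> (nat \<Rightarrow> real) \<Rightarrow> nat \<Rightarrow> real" where
  "weight_error d M w \<Gamma> p m = (\<Sum>l<d. label_moment d M w p l * \<Gamma> l m) - w m"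

lemma lsa_Ehat:
  assumes "c \<noteq> 0"
  shows "lsa d M (WPV d c) (WKQ d Q v c) (Ehat d M w xs eps xq)
       = linform {..<d} (\<lambda>m. \<Sum>l<d. label_moment d M w (xs, eps) l * eig_matrix d Q v l m) xq"
proof -
  let ?E = "Ehat d M w xs eps xq" and ?\<Gamma> = "eig_matrix d Q v"
  have E_corner: "?E d M = 0"
    unfolding Ehat_def by simp
  have PV: "mmul (d+1) (WPV d c) ?E d j = ?E d j / c" for j
    unfolding mmul_def WPV_def by (simp add: lessThan_Suc)
  have KQ: "mmul (d+1) (mmul (d+1) (mtrans ?E) (WKQ d Q v c)) ?E j M
      = c * (\<Sum>m<d. (\<Sum>l<d. ?E l j * ?\<Gamma> l m) * ?E m M)" for j
    unfolding mmul_def mtrans_def WKQ_def eig_matrix_def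
    by (simp add: lessThan_Suc sum_distrib_left sum_distrib_right ac_simps)
  have "lsa d M (WPV d c) (WKQ d Q v c) ?E
      = (\<Sum>j<M. ?E d j * (\<Sum>m<d. (\<Sum>l<d. ?E l j * ?\<Gamma> l m) * ?E m M)) / real M"
    using assms unfolding lsa_def mmul_def[of "M+1"] PV KQ by (simp add: lessThan_Suc E_corner)
  also have "\<dots> = (\<Sum>j<M. label d w (xs, eps) j * (\<Sum>m<d. (\<Sum>l<d. xs j l * ?\<Gamma> l m) * xq m)) / real M"
    unfolding Ehat_def label_def linform_def by (intro arg_cong2[where f="(/)"] sum.cong refl) auto
  also have "\<dots> = (\<Sum>m<d. \<Sum>l<d. \<Sum>j<M. label d w (xs, eps) j * xs j l * ?\<Gamma> l m * xq m / real M)"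
    by (simp add: sum_distrib_left sum_distrib_right sum_divide_distrib ac_simps sum.swap[of _ "{..<M}"])
  also have "\<dots> = linform {..<d} (\<lambda>m. \<Sum>l<d. label_moment d M w (xs, eps) l * ?\<Gamma> l m) xq"
    unfolding linform_def label_moment_def
    by (simp add: sum_distrib_left sum_distrib_right sum_divide_distrib ac_simps)
  finally show ?thesis .
qed

lemma lsa_Ehat_minus_target:
  assumes "c \<noteq> 0"
  shows "lsa d M (WPV d c) (WKQ d Q v c) (Ehat d M w xs eps xq) - linform {..<d} w xq
       = linform {..<d} (weight_error d M w (eig_matrix d Q v) (xs, eps)) xq"
  unfolding lsa_Ehat[OF assms] weight_error_def linform_def
  by (simp add: algebra_simps sum_subtractf)

lemma measurable_weight_error [measurable]:
  "(\<lambda>p. weight_error d M w \<Gamma> p m) \<in> borel_measurable (prompt_measure d M \<Lambda> \<sigma>)"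
  unfolding weight_error_def label_moment_def label_def linform_def by measurable

context gram_factorable
begin

lemma icl_loss_lsa:
  assumes "c \<noteq> 0"
  shows "icl_loss d M \<Lambda> \<sigma> w (lsa d M (WPV d c) (WKQ d Q v c))
    = (\<integral>p. qform d \<Lambda> (weight_error d M w (eig_matrix d Q v) p) (weight_error d M w (eig_matrix d Q v) p)
        \<partial>prompt_measure d M \<Lambda> \<sigma>)"
proof -
  let ?g = "weight_error d M w (eig_matrix d Q v)" and ?G = "gauss_vec d \<Lambda>"
  let ?P = "prompt_measure d M \<Lambda> \<sigma>"
  interpret G: prob_space ?G by (rule prob_space_gauss_vec)
  have [measurable]: "(\<lambda>z. (linform {..<d} (?g (fst z)) (snd z))\<^sup>2) \<in> borel_measurable (?P \<Otimes>\<^sub>M ?G)"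
    unfolding linform_def by measurable
  have [measurable]: "(\<lambda>p. qform d \<Lambda> (?g p) (?g p)) \<in> borel_measurable ?P"
    unfolding qform_def by measurable
  have inner: "(\<integral>\<^sup>+x. ennreal ((linform {..<d} (?g p) x)\<^sup>2) \<partial>?G) = ennreal (qform d \<Lambda> (?g p) (?g p))" for p
  proof -
    have "integrable ?G (\<lambda>x. (linform {..<d} (?g p) x)\<^sup>2)"
      using integrable_gauss_vec_linform_prod[of d \<Lambda> "[?g p, ?g p]"] by (simp add: power2_eq_square)
    then show ?thesis
      using integral_gauss_vec_linform_mult[of "?g p" "?g p"]
      by (subst nn_integral_eq_integral) (auto simp: power2_eq_square)
  qed
  \<comment> \<open>Integrating the query out first (Tonelli) needs no integrability of the loss.\<close>
  have "icl_loss d M \<Lambda> \<sigma> w (lsa d M (WPV d c) (WKQ d Q v c))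
      = (\<integral>z. (linform {..<d} (?g (fst z)) (snd z))\<^sup>2 \<partial>(?P \<Otimes>\<^sub>M ?G))"
    unfolding icl_loss_def data_measure_def
    by (intro Bochner_Integration.integral_cong refl)
      (auto simp: lsa_Ehat_minus_target[OF assms, unfolded linform_def] linform_def split: prod.split)
  also have "\<dots> = enn2real (\<integral>\<^sup>+p. \<integral>\<^sup>+x. ennreal ((linform {..<d} (?g p) x)\<^sup>2) \<partial>?G \<partial>?P)"
    by (subst integral_eq_nn_integral) (auto simp: G.nn_integral_fst[symmetric])
  also have "\<dots> = (\<integral>p. qform d \<Lambda> (?g p) (?g p) \<partial>?P)"
    by (subst integral_eq_nn_integral) (auto simp: inner qform_nonneg)
  finally show ?thesis .
qed

end

section \<open>Eigen-coordinates\<close>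

locale eigen_decomp =
  fixes d :: nat and Q \<Lambda> :: "nat \<Rightarrow> nat \<Rightarrow> real" and lam :: "nat \<Rightarrow> real"
  assumes orth: "\<forall>i<d. \<forall>j<d. (\<Sum>l<d. Q l i * Q l j) = (if i = j then 1 else 0)"
    and eig: "\<forall>i<d. \<forall>j<d. \<Lambda> i j = (\<Sum>l<d. Q i l * lam l * Q j l)"
    and nonneg: "\<forall>i<d. lam i \<ge> 0"
begin

abbreviation from_eig :: "(nat \<Rightarrow> real) \<Rightarrow> nat \<Rightarrow> real" where
  "from_eig s \<equiv> \<lambda>i. \<Sum>l<d. Q i l * s l"

sublocale gram_factorable d \<Lambda>
proof (unfold_locales, intro exI allI impI)
  fix i j assume "i < d" "j < d"
  have "(\<Sum>l<d. (Q i l * sqrt (lam l)) * (Q j l * sqrt (lam l))) = (\<Sum>l<d. Q i l * lam l * Q j l)"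
    using nonneg by (intro sum.cong refl) (auto simp: ac_simps)
  also have "\<dots> = \<Lambda> i j"
    using eig \<open>i < d\<close> \<open>j < d\<close> by simp
  finally show "(\<Sum>l<d. (Q i l * sqrt (lam l)) * (Q j l * sqrt (lam l))) = \<Lambda> i j" .
qed

lemma qform_eig: "qform d \<Lambda> a b = (\<Sum>k<d. lam k * (\<Sum>m<d. Q m k * a m) * (\<Sum>n<d. Q n k * b n))"
proof -
  have "qform d \<Lambda> a b = (\<Sum>i<d. \<Sum>j<d. \<Sum>k<d. a i * Q i k * lam k * Q j k * b j)"
    unfolding qform_def using eig by (intro sum.cong refl) (simp add: sum_distrib_left sum_distrib_right ac_simps)
  also have "\<dots> = (\<Sum>i<d. \<Sum>k<d. \<Sum>j<d. a i * Q i k * lam k * Q j k * b j)"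
    by (intro sum.cong refl sum.swap)
  also have "\<dots> = (\<Sum>k<d. \<Sum>i<d. \<Sum>j<d. a i * Q i k * lam k * Q j k * b j)"
    by (rule sum.swap)
  also have "\<dots> = (\<Sum>k<d. lam k * (\<Sum>m<d. Q m k * a m) * (\<Sum>n<d. Q n k * b n))"
    by (simp add: sum_distrib_left sum_distrib_right ac_simps)
  finally show ?thesis .
qed

lemma sum_orth_delta:
  assumes "k < d"
  shows "(\<Sum>p<d. (\<Sum>m<d. Q m k * Q m p) * f p) = f k"
proof -
  have "(\<Sum>p<d. (\<Sum>m<d. Q m k * Q m p) * f p) = (\<Sum>p<d. if k = p then f p else 0)"
    using orth assms by (intro sum.cong) auto
  then show ?thesis
    using assms by simp
qed

lemma transpose_from_eig:
  assumes "k < d"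
  shows "(\<Sum>m<d. Q m k * from_eig s m) = s k"
proof -
  have "(\<Sum>m<d. Q m k * from_eig s m) = (\<Sum>m<d. \<Sum>p<d. Q m k * Q m p * s p)"
    by (simp add: sum_distrib_left ac_simps)
  also have "\<dots> = (\<Sum>p<d. (\<Sum>m<d. Q m k * Q m p) * s p)"
    by (subst sum.swap) (simp add: sum_distrib_right)
  finally show ?thesis
    using sum_orth_delta[OF assms] by simp
qed

lemma transpose_eig_matrix:
  assumes "k < d"
  shows "(\<Sum>m<d. Q m k * eig_matrix d Q v l m) = Q l k * v k"
proof -
  have "(\<Sum>m<d. Q m k * eig_matrix d Q v l m) = (\<Sum>m<d. \<Sum>p<d. Q m k * Q m p * (Q l p * v p))"
    unfolding eig_matrix_def by (simp add: sum_distrib_left ac_simps)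
  also have "\<dots> = (\<Sum>p<d. (\<Sum>m<d. Q m k * Q m p) * (Q l p * v p))"
    by (subst sum.swap) (simp add: sum_distrib_right)
  finally show ?thesis
    using sum_orth_delta[OF assms] by simp
qed

lemma transpose_weight_error:
  assumes "k < d"
  shows "(\<Sum>m<d. Q m k * weight_error d M (from_eig s) (eig_matrix d Q v) p m)
       = v k * linform {..<d} (\<lambda>l. Q l k) (label_moment d M (from_eig s) p) - s k"
proof -
  let ?h = "label_moment d M (from_eig s) p"
  have "(\<Sum>m<d. Q m k * weight_error d M (from_eig s) (eig_matrix d Q v) p m)
      = (\<Sum>m<d. \<Sum>l<d. ?h l * (Q m k * eig_matrix d Q v l m)) - (\<Sum>m<d. Q m k * from_eig s m)"
    unfolding weight_error_def by (simp add: algebra_simps sum_subtractf sum_distrib_left)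
  also have "(\<Sum>m<d. \<Sum>l<d. ?h l * (Q m k * eig_matrix d Q v l m))
      = (\<Sum>l<d. ?h l * (\<Sum>m<d. Q m k * eig_matrix d Q v l m))"
    by (subst sum.swap) (simp add: sum_distrib_left)
  finally show ?thesis
    by (simp only: transpose_eig_matrix[OF assms] transpose_from_eig[OF assms])
      (simp add: linform_def sum_distrib_left ac_simps)
qed

lemma qform_weight_error:
  "qform d \<Lambda> (weight_error d M (from_eig s) (eig_matrix d Q v) p) (weight_error d M (from_eig s) (eig_matrix d Q v) p)
     = (\<Sum>k<d. lam k * (v k * linform {..<d} (\<lambda>l. Q l k) (label_moment d M (from_eig s) p) - s k)\<^sup>2)"
  unfolding qform_eig by (intro sum.cong refl) (simp add: transpose_weight_error power2_eq_square)

lemma qform_eigvec: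
  assumes "k < d"
  shows "qform d \<Lambda> a (\<lambda>l. Q l k) = lam k * (\<Sum>m<d. Q m k * a m)"
proof -
  have "qform d \<Lambda> a (\<lambda>l. Q l k) = (\<Sum>j<d. (\<Sum>m<d. Q m j * a m) * (\<Sum>n<d. Q n j * Q n k) * lam j)"
    unfolding qform_eig by (intro sum.cong refl) (simp add: ac_simps)
  also have "\<dots> = (\<Sum>j<d. if j = k then (\<Sum>m<d. Q m j * a m) * lam j else 0)"
    using orth assms by (intro sum.cong refl) auto
  finally show ?thesis
    using assms by simp
qed

lemma icl_loss_fk:
  assumes "c \<noteq> 0"
  shows "icl_loss d M \<Lambda> \<sigma> (from_eig s) (fk d N M Q lam c k)
    = (\<integral>p. (\<Sum>i<d. lam i * (Vk d N lam k i * linform {..<d} (\<lambda>l. Q l i) (label_moment d M (from_eig s) p)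
          - s i)\<^sup>2) \<partial>prompt_measure d M \<Lambda> \<sigma>)"
proof -
  have "fk d N M Q lam c k = lsa d M (WPV d c) (WKQ d Q (Vk d N lam k) c)"
    by (simp add: fun_eq_iff fk_def)
  then show ?thesis
    by (simp add: icl_loss_lsa[OF assms] qform_weight_error)
qed

lemma has_bochner_integral_label_moment_eigvec_sq:
  assumes "M \<ge> 1" "k < d" "s k = 0"
  shows "has_bochner_integral (prompt_measure d M \<Lambda> \<sigma>)
    (\<lambda>p. (linform {..<d} (\<lambda>l. Q l k) (label_moment d M (from_eig s) p))\<^sup>2)
    (((\<Sum>i<d. lam i * (s i)\<^sup>2) + \<sigma>\<^sup>2) * lam k / real M)"
proof -
  have "qform d \<Lambda> (from_eig s) (from_eig s) = (\<Sum>i<d. lam i * (s i)\<^sup>2)"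
    unfolding qform_eig by (intro sum.cong refl) (simp add: transpose_from_eig power2_eq_square)
  moreover have "qform d \<Lambda> (\<lambda>l. Q l k) (\<lambda>l. Q l k) = lam k"
    using assms(2) orth by (simp add: qform_eigvec)
  moreover have "qform d \<Lambda> (from_eig s) (\<lambda>l. Q l k) = 0"
    using assms(2,3) by (simp add: qform_eigvec transpose_from_eig)
  ultimately show ?thesis
    using has_bochner_integral_label_moment_proj_sq[OF assms(1), where q="\<lambda>l. Q l k" and w="from_eig s"]
    by simp
qed

end

lemma sum_Vk_residual_diff:
  assumes "r \<le> r'" "r' \<le> d" and s0: "\<forall>i. r \<le> i \<and> i < d \<longrightarrow> s i = 0"
  shows "(\<Sum>i<d. lam i * (Vk d N lam r' i * x i - s i)\<^sup>2) - (\<Sum>i<d. lam i * (Vk d N lam r i * x i - s i)\<^sup>2)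
       = (\<Sum>i\<in>{r..<r'}. lam i * (Vk d N lam r' i)\<^sup>2 * (x i)\<^sup>2)"
proof -
  have "(\<Sum>i<d. lam i * (Vk d N lam r' i * x i - s i)\<^sup>2) - (\<Sum>i<d. lam i * (Vk d N lam r i * x i - s i)\<^sup>2)
      = (\<Sum>i<d. if i \<in> {r..<r'} then lam i * (Vk d N lam r' i)\<^sup>2 * (x i)\<^sup>2 else 0)"
    unfolding sum_subtractf[symmetric]
  proof (intro sum.cong refl)
    fix i assume "i \<in> {..<d}"
    then show "lam i * (Vk d N lam r' i * x i - s i)\<^sup>2 - lam i * (Vk d N lam r i * x i - s i)\<^sup>2
        = (if i \<in> {r..<r'} then lam i * (Vk d N lam r' i)\<^sup>2 * (x i)\<^sup>2 else 0)"
      using assms by (cases "i < r") (auto simp: Vk_def power_mult_distrib)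
  qed
  also have "\<dots> = (\<Sum>i\<in>{..<d} \<inter> {r..<r'}. lam i * (Vk d N lam r' i)\<^sup>2 * (x i)\<^sup>2)"
    by (rule sum.inter_restrict[symmetric]) simp
  also have "{..<d} \<inter> {r..<r'} = {r..<r'}"
    using assms(2) by auto
  finally show ?thesis .
qed

theorem theorem4p4:
  fixes d N M r r' :: nat and \<sigma> c1 c2 :: real
    and \<Lambda> Q :: "nat \<Rightarrow> nat \<Rightarrow> real" and lam s :: "nat \<Rightarrow> real"
  assumes "d \<ge> 1" and "N \<ge> 1" and "M \<ge> 1" and "\<sigma> \<ge> 0"
    and sym: "\<forall>i<d. \<forall>j<d. \<Lambda> i j = \<Lambda> j i"
    and psd: "\<forall>u. (\<Sum>i<d. \<Sum>j<d. u i * \<Lambda> i j * u j) \<ge> 0"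
    and orth: "\<forall>i<d. \<forall>j<d. (\<Sum>l<d. Q l i * Q l j) = (if i = j then 1 else 0)"
    and eig: "\<forall>i<d. \<forall>j<d. \<Lambda> i j = (\<Sum>l<d. Q i l * lam l * Q j l)"
    and sorted: "\<forall>i j. i \<le> j \<and> j < d \<longrightarrow> lam j \<le> lam i"
    and nonneg: "\<forall>i<d. lam i \<ge> 0"
    and "r \<le> r'" and "r' \<le> d"
    and "c1 \<noteq> 0" and "c2 \<noteq> 0"
    and s0: "\<forall>i. r \<le> i \<and> i < d \<longrightarrow> s i = 0"
  shows "icl_loss d M \<Lambda> \<sigma> (\<lambda>i. \<Sum>l<d. Q i l * s l) (fk d N M Q lam c2 r')
         - icl_loss d M \<Lambda> \<sigma> (\<lambda>i. \<Sum>l<d. Q i l * s l) (fk d N M Q lam c1 r)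
       = (1 / real M) * ((\<Sum>i<d. lam i * (s i)\<^sup>2) + \<sigma>\<^sup>2) *
         (\<Sum>i\<in>{r..<r'}. (real N * lam i / ((real N + 1) * lam i + trD d lam))\<^sup>2)"
proof -
  interpret eigen_decomp d Q \<Lambda> lam
    using orth eig nonneg by unfold_locales
  let ?P = "prompt_measure d M \<Lambda> \<sigma>"
  let ?h = "\<lambda>i p. linform {..<d} (\<lambda>l. Q l i) (label_moment d M (from_eig s) p)"
  let ?R = "\<lambda>k p. \<Sum>i<d. lam i * (Vk d N lam k i * ?h i p - s i)\<^sup>2"
  let ?S = "(\<Sum>i<d. lam i * (s i)\<^sup>2) + \<sigma>\<^sup>2"
  have "icl_loss d M \<Lambda> \<sigma> (from_eig s) (fk d N M Q lam c2 r') - icl_loss d M \<Lambda> \<sigma> (from_eig s) (fk d N M Q lam c1 r)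
      = (\<integral>p. ?R r' p - ?R r p \<partial>?P)"
    using \<open>M \<ge> 1\<close> \<open>c1 \<noteq> 0\<close> \<open>c2 \<noteq> 0\<close>
    by (simp add: icl_loss_fk Bochner_Integration.integral_diff integrable_weighted_residual_sum)
  also have "\<dots> = (\<integral>p. (\<Sum>i\<in>{r..<r'}. lam i * (Vk d N lam r' i)\<^sup>2 * (?h i p)\<^sup>2) \<partial>?P)"
    by (simp add: sum_Vk_residual_diff[OF \<open>r \<le> r'\<close> \<open>r' \<le> d\<close> s0])
  also have "\<dots> = (\<Sum>i\<in>{r..<r'}. lam i * (Vk d N lam r' i)\<^sup>2 * (?S * lam i / real M))"
    using \<open>M \<ge> 1\<close> \<open>r' \<le> d\<close> s0
    by (intro has_bochner_integral_integral_eq has_bochner_integral_sum has_bochner_integral_mult_right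
        has_bochner_integral_label_moment_eigvec_sq) auto
  also have "\<dots> = (1 / real M) * ?S *
      (\<Sum>i\<in>{r..<r'}. (real N * lam i / ((real N + 1) * lam i + trD d lam))\<^sup>2)"
    unfolding sum_distrib_left
    by (intro sum.cong refl) (auto simp: Vk_def power2_eq_square field_simps)
  finally show ?thesis .
qed

end
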